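(* Let $P_n$ be a path on $n$ vertices with an arbitrary total order on its vertices. Then $R_o(P_n,P_n)\le 2^{\lceil\log_2 n\rceil\cdot(\lceil\log_2 n\rceil+1)}$.
   Context: An ordered graph is a graph with a total order $\prec$ on its vertices. An ordered graph $F$ is contained in an ordered graph $H$ if there is an injective map $V(F)\to V(H)$ preserving both the vertex order and adjacency. The ordered Ramsey number $R_o(F,G)$ is the smallest $N$ such that every red/blue colouring of the edges of the ordered complete graph $K_N$ contains a blue copy of $F$ or a red copy of $G$. *)

theory Defs
  imports Complex_Main
begin

text \<open>Ordered graphs are represented on the vertex set {0..<m} with the natural order
  and a (symmetric) edge relation E.  A 2-colouring of the ordered complete graph K_N
  on {0..<N} is a function col :: nat => nat => bool, where for i < j the value
  col i j = True means the edge ij is blue and False means it is red (values for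
  i >= j are irrelevant).\<close>

definition has_coloured_copy ::
  "nat \<Rightarrow> (nat \<Rightarrow> nat \<Rightarrow> bool) \<Rightarrow> (nat \<Rightarrow> nat \<Rightarrow> bool) \<Rightarrow> nat \<Rightarrow> bool" where
  "has_coloured_copy m E C N \<longleftrightarrow>
     (\<exists>f. strict_mono_on {0..<m} f \<and> f ` {0..<m} \<subseteq> {0..<N} \<and>
          (\<forall>u<m. \<forall>v<m. u < v \<and> E u v \<longrightarrow> C (f u) (f v)))"

definition ordered_ramsey ::
  "nat \<Rightarrow> (nat \<Rightarrow> nat \<Rightarrow> bool) \<Rightarrow> nat \<Rightarrow> (nat \<Rightarrow> nat \<Rightarrow> bool) \<Rightarrow> nat" where
  "ordered_ramsey m1 E1 m2 E2 =
     (LEAST N. \<forall>col :: nat \<Rightarrow> nat \<Rightarrow> bool.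
         has_coloured_copy m1 E1 col N \<or> has_coloured_copy m2 E2 (\<lambda>i j. \<not> col i j) N)"

text \<open>The path on n vertices visiting the vertices in the order
  \<sigma> 0, \<sigma> 1, ..., \<sigma> (n-1); with \<sigma> a bijection of {0..<n} this gives every ordering
  of a path.\<close>

definition path_edges :: "nat \<Rightarrow> (nat \<Rightarrow> nat) \<Rightarrow> nat \<Rightarrow> nat \<Rightarrow> bool" where
  "path_edges n \<sigma> u v \<longleftrightarrow> (\<exists>i. i + 1 < n \<and> {u, v} = {\<sigma> i, \<sigma> (i + 1)})"

end

theory Submission
  imports Defs
begin

text \<open>Split the vertex set into 2n consecutive blocks of size s, one block per vertex of the
  ordered path. Either a blue path runs through the blocks, one vertex per block, or greedily
  extending blue walks from the last path vertex backwards fails somewhere, which yields two s-sets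
  X < Y with all edges between them red. In the latter case the induction hypothesis applied inside
  X and inside Y gives a blue path or red copies of the two halves of any ordered graph H on at
  most 2^j vertices, and the red edges between X and Y glue the halves together.
  Hence R_o(P_n, H) \<le> (2n)^j, which for H = P_n and j = \<lceil>log_2 n\<rceil> is at most 2^(j(j+1)).\<close>

definition coloured_copy_in ::
  "nat \<Rightarrow> (nat \<Rightarrow> nat \<Rightarrow> bool) \<Rightarrow> (nat \<Rightarrow> nat \<Rightarrow> bool) \<Rightarrow> nat set \<Rightarrow> bool" where
  "coloured_copy_in m E C X \<longleftrightarrow>
     (\<exists>f. strict_mono_on {0..<m} f \<and> f ` {0..<m} \<subseteq> X \<and>
          (\<forall>u<m. \<forall>v<m. u < v \<and> E u v \<longrightarrow> C (f u) (f v)))"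

lemma has_coloured_copy_iff_coloured_copy_in:
  "has_coloured_copy m E C N \<longleftrightarrow> coloured_copy_in m E C {0..<N}"
  unfolding has_coloured_copy_def coloured_copy_in_def ..

lemma coloured_copy_in_mono:
  assumes "coloured_copy_in m E C X" and "X \<subseteq> Y"
  shows "coloured_copy_in m E C Y"
proof -
  obtain f where f: "strict_mono_on {0..<m} f" "f ` {0..<m} \<subseteq> X"
    "\<forall>u<m. \<forall>v<m. u < v \<and> E u v \<longrightarrow> C (f u) (f v)"
    using assms(1) unfolding coloured_copy_in_def by blast
  have "f ` {0..<m} \<subseteq> Y"
    using f(2) assms(2) by (rule subset_trans)
  then show ?thesis
    unfolding coloured_copy_in_def using f(1,3) by blast
qed

lemma has_coloured_copy_le_one:
  assumes "m \<le> 1" and "m \<le> N"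
  shows "has_coloured_copy m E C N"
  unfolding has_coloured_copy_def using assms
  by (intro exI[of _ id]) (auto simp: strict_mono_on_def)

lemma coloured_copy_in_image:
  assumes e: "strict_mono_on {0..<s} e"
    and copy: "coloured_copy_in m E (\<lambda>u v. C (e u) (e v)) {0..<s}"
  shows "coloured_copy_in m E C (e ` {0..<s})"
proof -
  obtain f where f: "strict_mono_on {0..<m} f" "f ` {0..<m} \<subseteq> {0..<s}"
    "\<forall>u<m. \<forall>v<m. u < v \<and> E u v \<longrightarrow> C (e (f u)) (e (f v))"
    using copy unfolding coloured_copy_in_def by blast
  have "strict_mono_on {0..<m} (e \<circ> f)"
  proof (rule strict_mono_onI)
    fix u v assume "u \<in> {0..<m}" "v \<in> {0..<m}" "u < v"
    then show "(e \<circ> f) u < (e \<circ> f) v"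
      using f(2) strict_mono_onD[OF f(1)] strict_mono_onD[OF e] by (auto simp: image_subset_iff)
  qed
  moreover have "(e \<circ> f) ` {0..<m} \<subseteq> e ` {0..<s}"
    using f(2) by auto
  moreover have "\<forall>u<m. \<forall>v<m. u < v \<and> E u v \<longrightarrow> C ((e \<circ> f) u) ((e \<circ> f) v)"
    using f(3) by simp
  ultimately show ?thesis
    unfolding coloured_copy_in_def by blast
qed

lemma finite_set_strict_mono_enumeration:
  fixes X :: "nat set"
  assumes "finite X"
  obtains e where "strict_mono_on {0..<card X} e" "e ` {0..<card X} = X"
proof
  let ?xs = "sorted_list_of_set X"
  have len: "length ?xs = card X" and sorted: "sorted_wrt (<) ?xs"
    by simp_all
  show "strict_mono_on {0..<card X} ((!) ?xs)"
    unfolding strict_mono_on_def using sorted_wrt_nth_less[OF sorted] len by auto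
  have "(!) ?xs ` {0..<card X} = set ?xs"
    using len by (auto simp: set_conv_nth)
  then show "(!) ?xs ` {0..<card X} = X"
    using assms by simp
qed

lemma coloured_copy_in_card_eq:
  assumes "finite X" and "card X = s"
    and ramsey: "\<And>C. has_coloured_copy m1 E1 C s \<or> has_coloured_copy m2 E2 (\<lambda>i j. \<not> C i j) s"
  shows "coloured_copy_in m1 E1 col X \<or> coloured_copy_in m2 E2 (\<lambda>i j. \<not> col i j) X"
proof -
  obtain e where e: "strict_mono_on {0..<s} e" "e ` {0..<s} = X"
    using finite_set_strict_mono_enumeration[OF assms(1)] assms(2) by metis
  show ?thesis
    using ramsey[of "\<lambda>u v. col (e u) (e v)"]
      coloured_copy_in_image[OF e(1), of m1 E1 col]
      coloured_copy_in_image[OF e(1), of m2 E2 "\<lambda>i j. \<not> col i j"]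
    unfolding has_coloured_copy_iff_coloured_copy_in e(2) by blast
qed

lemma coloured_copy_in_join:
  assumes X: "coloured_copy_in b1 E C X"
    and Y: "coloured_copy_in b2 (\<lambda>u v. E (u + b1) (v + b1)) C Y"
    and XY: "\<And>x y. x \<in> X \<Longrightarrow> y \<in> Y \<Longrightarrow> x < y \<and> C x y"
  shows "coloured_copy_in (b1 + b2) E C (X \<union> Y)"
proof -
  obtain f1 where f1: "strict_mono_on {0..<b1} f1" "f1 ` {0..<b1} \<subseteq> X"
    "\<forall>u<b1. \<forall>v<b1. u < v \<and> E u v \<longrightarrow> C (f1 u) (f1 v)"
    using X unfolding coloured_copy_in_def by blast
  obtain f2 where f2: "strict_mono_on {0..<b2} f2" "f2 ` {0..<b2} \<subseteq> Y"
    "\<forall>u<b2. \<forall>v<b2. u < v \<and> E (u + b1) (v + b1) \<longrightarrow> C (f2 u) (f2 v)"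
    using Y unfolding coloured_copy_in_def by blast
  define f where "f u = (if u < b1 then f1 u else f2 (u - b1))" for u
  have fX: "f u \<in> X" if "u < b1" for u
    using that f1(2) by (auto simp: f_def)
  have fY: "f u \<in> Y" if "b1 \<le> u" "u < b1 + b2" for u
    using that f2(2) by (auto simp: f_def)
  have edges: "f u < f v \<and> (E u v \<longrightarrow> C (f u) (f v))" if "u < v" "v < b1 + b2" for u v
  proof (cases "v < b1")
    case True
    then show ?thesis
      using that f1(3) strict_mono_onD[OF f1(1)] by (simp add: f_def)
  next
    case v: False
    show ?thesis
    proof (cases "u < b1")
      case True
      then show ?thesis using XY fX fY that v by simp
    next
      case False
      with that v have "u - b1 < v - b1" "v - b1 < b2" by auto
      then show ?thesis
        using False v f2(3) strict_mono_onD[OF f2(1)] by (auto simp: f_def)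
    qed
  qed
  then have "strict_mono_on {0..<b1 + b2} f"
    by (auto intro!: strict_mono_onI)
  moreover have "f ` {0..<b1 + b2} \<subseteq> X \<union> Y"
  proof (rule image_subsetI)
    fix u assume "u \<in> {0..<b1 + b2}"
    then show "f u \<in> X \<union> Y"
      using fX fY by (cases "u < b1") auto
  qed
  ultimately show ?thesis
    unfolding coloured_copy_in_def using edges by (intro exI[of _ f] conjI) auto
qed

definition layered_walk ::
  "(nat \<Rightarrow> 'a set) \<Rightarrow> ('a \<Rightarrow> 'a \<Rightarrow> bool) \<Rightarrow> nat \<Rightarrow> nat \<Rightarrow> (nat \<Rightarrow> 'a) \<Rightarrow> bool" where
  "layered_walk V B i a g \<longleftrightarrow>
     (\<forall>t. i \<le> t \<and> t < a \<longrightarrow> g t \<in> V t) \<and> (\<forall>t. i \<le> t \<and> Suc t < a \<longrightarrow> B (g t) (g (Suc t)))"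

lemma layered_walk_last:
  assumes "x \<in> V (a - 1)"
  shows "layered_walk V B (a - 1) a (\<lambda>_. x)"
proof -
  have "t = a - 1" if "a - 1 \<le> t" "t < a" for t
    using that by linarith
  then show ?thesis
    using assms unfolding layered_walk_def by auto
qed

lemma layered_walk_extend:
  assumes "layered_walk V B (Suc i) a g" and "x \<in> V i" and "B x (g (Suc i))"
  shows "layered_walk V B i a (g(i := x))"
  unfolding layered_walk_def
proof (intro conjI allI impI)
  fix t
  show "(g(i := x)) t \<in> V t" if "i \<le> t \<and> t < a"
    using assms that by (cases "t = i") (auto simp: layered_walk_def)
  show "B ((g(i := x)) t) ((g(i := x)) (Suc t))" if "i \<le> t \<and> Suc t < a"
    using assms that by (cases "t = i") (auto simp: layered_walk_def)
qed

definition walk_starts :: "(nat \<Rightarrow> 'a set) \<Rightarrow> ('a \<Rightarrow> 'a \<Rightarrow> bool) \<Rightarrow> nat \<Rightarrow> nat \<Rightarrow> 'a set" where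
  "walk_starts V B a i = {x \<in> V i. \<exists>g. g i = x \<and> layered_walk V B i a g}"

text \<open>If fewer than s vertices of layer n have a B-neighbour among the starting points of walks
  from layer n + 1, then s non-neighbours together with s of those starting points form a sparse
  pair; otherwise the at least s vertices with a neighbour start walks themselves.\<close>

lemma walk_starts_step:
  assumes fin: "finite (V n)" and card: "2 * s \<le> card (V n)"
    and next_starts: "s \<le> card (walk_starts V B a (Suc n))"
  shows "s \<le> card (walk_starts V B a n) \<or>
    (\<exists>X Y. X \<subseteq> V n \<and> Y \<subseteq> V (Suc n) \<and> card X = s \<and> card Y = s \<and> (\<forall>x\<in>X. \<forall>y\<in>Y. \<not> B x y))"
    (is "_ \<or> ?sparse")
proof (rule disjCI)
  assume dense: "\<not> ?sparse"
  let ?W = "walk_starts V B a (Suc n)"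
  define T where "T = {x \<in> V n. \<forall>y\<in>?W. \<not> B x y}"
  have "card T < s"
  proof (rule ccontr)
    assume "\<not> card T < s"
    then obtain X where "X \<subseteq> T" "card X = s"
      by (meson not_less obtain_subset_with_card_n)
    moreover obtain Y where "Y \<subseteq> ?W" "card Y = s"
      using next_starts by (meson obtain_subset_with_card_n)
    moreover have "X \<subseteq> V n" "Y \<subseteq> V (Suc n)"
      using \<open>X \<subseteq> T\<close> \<open>Y \<subseteq> ?W\<close> unfolding T_def walk_starts_def by auto
    moreover have "\<forall>x\<in>X. \<forall>y\<in>Y. \<not> B x y"
      using \<open>X \<subseteq> T\<close> \<open>Y \<subseteq> ?W\<close> unfolding T_def by blast
    ultimately have ?sparse
      by (intro exI[of _ X] exI[of _ Y]) auto
    with dense show False ..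
  qed
  moreover have "card (V n - T) = card (V n) - card T"
    using fin by (intro card_Diff_subset) (auto simp: T_def)
  moreover have "V n - T \<subseteq> walk_starts V B a n"
  proof
    fix x assume x: "x \<in> V n - T"
    then obtain g where "B x (g (Suc n))" "layered_walk V B (Suc n) a g"
      unfolding T_def walk_starts_def by blast
    then have "layered_walk V B n a (g(n := x))"
      using x layered_walk_extend[of V B n a g x] by simp
    then show "x \<in> walk_starts V B a n"
      using x unfolding walk_starts_def by (intro CollectI conjI exI[of _ "g(n := x)"]) auto
  qed
  moreover have "finite (walk_starts V B a n)"
    using fin unfolding walk_starts_def by simp
  ultimately show "s \<le> card (walk_starts V B a n)"
    using card card_mono[of "walk_starts V B a n" "V n - T"] by linarith
qed

lemma layered_walk_or_sparse_pair:
  assumes fin: "\<And>t. t < a \<Longrightarrow> finite (V t)"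
    and card: "\<And>t. t < a \<Longrightarrow> 2 * s \<le> card (V t)" and "0 < s"
  shows "(\<exists>g. layered_walk V B 0 a g) \<or>
    (\<exists>t X Y. Suc t < a \<and> X \<subseteq> V t \<and> Y \<subseteq> V (Suc t) \<and> card X = s \<and> card Y = s \<and>
       (\<forall>x\<in>X. \<forall>y\<in>Y. \<not> B x y))"
    (is "_ \<or> ?sparse")
proof (cases "a = 0 \<or> ?sparse")
  case True
  then show ?thesis by (auto simp: layered_walk_def)
next
  case False
  then have a: "0 < a" and dense: "\<not> ?sparse" by auto
  have "V (a - 1) \<subseteq> walk_starts V B a (a - 1)"
  proof
    fix x assume "x \<in> V (a - 1)"
    then show "x \<in> walk_starts V B a (a - 1)"
      using layered_walk_last[of x V a B] unfolding walk_starts_def by auto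
  qed
  then have last: "s \<le> card (walk_starts V B a (a - 1))"
    using card[of "a - 1"] fin[of "a - 1"] a card_mono[of "walk_starts V B a (a - 1)" "V (a - 1)"]
    by (auto simp: walk_starts_def)
  have "s \<le> card (walk_starts V B a 0)"
  proof (rule inc_induct[of 0 "a - 1"])
    fix n assume "n < a - 1" and next_starts: "s \<le> card (walk_starts V B a (Suc n))"
    then have n: "Suc n < a" by simp
    have "\<not> (\<exists>X Y. X \<subseteq> V n \<and> Y \<subseteq> V (Suc n) \<and> card X = s \<and> card Y = s \<and>
        (\<forall>x\<in>X. \<forall>y\<in>Y. \<not> B x y))"
      using dense n by blast
    moreover have "n < a"
      using n by simp
    ultimately show "s \<le> card (walk_starts V B a n)"
      using walk_starts_step[OF fin card next_starts] by blast
  qed (use last in simp_all)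
  then obtain x where "x \<in> walk_starts V B a 0"
    using \<open>0 < s\<close> by (metis card.empty ex_in_conv not_le)
  then show ?thesis
    unfolding walk_starts_def by blast
qed

definition block :: "nat \<Rightarrow> nat \<Rightarrow> nat set" where
  "block k p = {k * p..<k * (p + 1)}"

lemma card_block: "card (block k p) = k"
  by (simp add: block_def algebra_simps)

lemma block_less:
  assumes "x \<in> block k p" and "y \<in> block k q" and "p < q"
  shows "x < y"
proof -
  have "k * (p + 1) \<le> k * q"
    using assms(3) by (intro mult_le_mono2) auto
  then show ?thesis
    using assms(1,2) by (auto simp: block_def)
qed

lemma block_subset:
  assumes "p < a"
  shows "block k p \<subseteq> {0..<k * a}"
proof -
  have "k * (p + 1) \<le> k * a"
    using assms by (intro mult_le_mono2) auto
  then show ?thesis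
    by (auto simp: block_def)
qed

definition blue_adj :: "(nat \<Rightarrow> nat \<Rightarrow> bool) \<Rightarrow> nat \<Rightarrow> nat \<Rightarrow> bool" where
  "blue_adj col x y \<longleftrightarrow> (if x < y then col x y else col y x)"

lemma blue_path_of_layered_walk:
  assumes \<sigma>: "bij_betw \<sigma> {0..<a} {0..<a}"
    and walk: "layered_walk (\<lambda>t. block k (\<sigma> t)) (blue_adj col) 0 a g"
    and N: "k * a \<le> N"
  shows "has_coloured_copy a (path_edges a \<sigma>) col N"
proof -
  define f where "f = g \<circ> inv_into {0..<a} \<sigma>"
  have f_\<sigma>: "f (\<sigma> i) = g i" if "i < a" for i
    using that \<sigma> unfolding f_def bij_betw_def by (simp add: inv_into_f_f)
  have f_block: "f u \<in> block k u" if u: "u < a" for u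
  proof -
    obtain i where "i < a" "u = \<sigma> i"
      using u \<sigma> unfolding bij_betw_def by force
    then show ?thesis
      using walk f_\<sigma> unfolding layered_walk_def by auto
  qed
  have f_less: "f u < f v" if "u < v" "v < a" for u v
    using that block_less f_block by (meson less_trans)
  have edges: "\<forall>u<a. \<forall>v<a. u < v \<and> path_edges a \<sigma> u v \<longrightarrow> col (f u) (f v)"
  proof (intro allI impI)
    fix u v assume uv: "u < a" "v < a" "u < v \<and> path_edges a \<sigma> u v"
    then have lt: "u < v" and edge: "path_edges a \<sigma> u v" by auto
    obtain i where i: "i + 1 < a" "{u, v} = {\<sigma> i, \<sigma> (i + 1)}"
      using edge unfolding path_edges_def by blast
    then have "blue_adj col (g i) (g (Suc i))"
      using walk unfolding layered_walk_def by auto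
    moreover have "{f u, f v} = {g i, g (Suc i)}"
      using i f_\<sigma> by (auto simp: doubleton_eq_iff)
    ultimately show "col (f u) (f v)"
      using f_less[OF lt uv(2)] by (auto simp: doubleton_eq_iff blue_adj_def)
  qed
  have image: "f ` {0..<a} \<subseteq> {0..<N}"
    using f_block block_subset N by fastforce
  have mono: "strict_mono_on {0..<a} f"
    using f_less by (auto intro: strict_mono_onI)
  show ?thesis
    unfolding has_coloured_copy_def by (intro exI[of _ f] conjI mono image edges)
qed

lemma ordered_red_pair_of_blocks:
  assumes X: "X \<subseteq> block k p" and Y: "Y \<subseteq> block k q" and "p \<noteq> q"
    and sparse: "\<forall>x\<in>X. \<forall>y\<in>Y. \<not> blue_adj col x y"
  obtains X' Y' where "{X', Y'} = {X, Y}" and "\<forall>x\<in>X'. \<forall>y\<in>Y'. x < y \<and> \<not> col x y"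
proof (cases "p < q")
  case True
  have "\<forall>x\<in>X. \<forall>y\<in>Y. x < y \<and> \<not> col x y"
  proof (intro ballI)
    fix x y assume xy: "x \<in> X" "y \<in> Y"
    then have "x < y"
      using X Y True block_less by blast
    then show "x < y \<and> \<not> col x y"
      using sparse[rule_format, OF xy] by (simp add: blue_adj_def)
  qed
  then show ?thesis
    using that[of X Y] by simp
next
  case False
  then have "q < p"
    using \<open>p \<noteq> q\<close> by linarith
  have "\<forall>y\<in>Y. \<forall>x\<in>X. y < x \<and> \<not> col y x"
  proof (intro ballI)
    fix x y assume xy: "x \<in> X" "y \<in> Y"
    then have "y < x"
      using X Y \<open>q < p\<close> block_less by blast
    then show "y < x \<and> \<not> col y x"
      using sparse[rule_format, OF xy] by (simp add: blue_adj_def)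
  qed
  then show ?thesis
    using that[of Y X] by (simp add: insert_commute)
qed

lemma blue_path_or_red_pair:
  assumes \<sigma>: "bij_betw \<sigma> {0..<a} {0..<a}" and "0 < s" and N: "2 * s * a \<le> N"
  shows "has_coloured_copy a (path_edges a \<sigma>) col N \<or>
    (\<exists>X Y. X \<subseteq> {0..<N} \<and> Y \<subseteq> {0..<N} \<and> card X = s \<and> card Y = s \<and>
       (\<forall>x\<in>X. \<forall>y\<in>Y. x < y \<and> \<not> col x y))"
proof -
  define V where "V t = block (2 * s) (\<sigma> t)" for t
  have \<sigma>_less: "\<sigma> t < a" if "t < a" for t
    using that \<sigma> unfolding bij_betw_def by auto
  have V_sub: "V t \<subseteq> {0..<N}" if "t < a" for t
    using block_subset[OF \<sigma>_less[OF that], of "2 * s"] N unfolding V_def by fastforce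
  consider (walk) g where "layered_walk V (blue_adj col) 0 a g"
    | (sparse) t X Y where "Suc t < a" "X \<subseteq> V t" "Y \<subseteq> V (Suc t)" "card X = s" "card Y = s"
        "\<forall>x\<in>X. \<forall>y\<in>Y. \<not> blue_adj col x y"
    using layered_walk_or_sparse_pair[of a V s "blue_adj col"] \<open>0 < s\<close>
    by (auto simp: V_def card_block block_def)
  then show ?thesis
  proof cases
    case walk
    then show ?thesis
      using blue_path_of_layered_walk[OF \<sigma>, of "2 * s"] N unfolding V_def by blast
  next
    case (sparse t X Y)
    have "\<sigma> t \<noteq> \<sigma> (Suc t)"
      using inj_onD[of \<sigma> "{0..<a}" t "Suc t"] \<sigma> sparse(1) unfolding bij_betw_def by auto
    then obtain X' Y' where XY': "{X', Y'} = {X, Y}" "\<forall>x\<in>X'. \<forall>y\<in>Y'. x < y \<and> \<not> col x y"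
      using ordered_red_pair_of_blocks[OF sparse(2,3)[unfolded V_def] _ sparse(6)] by blast
    have "X \<subseteq> {0..<N}" "Y \<subseteq> {0..<N}"
      using sparse(1-3) V_sub[of t] V_sub[of "Suc t"] by auto
    then have "X' \<subseteq> {0..<N} \<and> Y' \<subseteq> {0..<N} \<and> card X' = s \<and> card Y' = s"
      using XY'(1) sparse(4,5) by (auto simp: doubleton_eq_iff)
    then show ?thesis
      using XY'(2) by (intro disjI2 exI[of _ X'] exI[of _ Y']) simp
  qed
qed

lemma blue_copy_or_red_copy_of_red_pair:
  assumes IH: "\<And>C b' E'. b' \<le> B \<Longrightarrow>
      has_coloured_copy a P C s \<or> has_coloured_copy b' E' (\<lambda>x y. \<not> C x y) s"
    and b: "b \<le> 2 * B"
    and sub: "X \<subseteq> {0..<N}" "Y \<subseteq> {0..<N}" and card: "card X = s" "card Y = s"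
    and cross: "\<forall>x\<in>X. \<forall>y\<in>Y. x < y \<and> \<not> col x y"
  shows "has_coloured_copy a P col N \<or> has_coloured_copy b E (\<lambda>x y. \<not> col x y) N"
proof -
  define b1 where "b1 = (b + 1) div 2"
  have b1: "b1 \<le> B" "b - b1 \<le> B" "b1 + (b - b1) = b"
    using b by (auto simp: b1_def)
  have fin: "finite X" "finite Y"
    using finite_subset[OF sub(1)] finite_subset[OF sub(2)] by simp_all
  consider (blue) "coloured_copy_in a P col X \<or> coloured_copy_in a P col Y"
    | (red) "coloured_copy_in b1 E (\<lambda>x y. \<not> col x y) X"
        "coloured_copy_in (b - b1) (\<lambda>u v. E (u + b1) (v + b1)) (\<lambda>x y. \<not> col x y) Y"
    using coloured_copy_in_card_eq[OF fin(1) card(1) IH[OF b1(1)]]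
      coloured_copy_in_card_eq[OF fin(2) card(2) IH[OF b1(2)]]
    by blast
  then show ?thesis
  proof cases
    case blue
    then show ?thesis
      using coloured_copy_in_mono[OF _ sub(1)] coloured_copy_in_mono[OF _ sub(2)]
      unfolding has_coloured_copy_iff_coloured_copy_in by blast
  next
    case red
    have "coloured_copy_in b E (\<lambda>x y. \<not> col x y) (X \<union> Y)"
      using coloured_copy_in_join[OF red] cross b1(3) by simp
    then have "coloured_copy_in b E (\<lambda>x y. \<not> col x y) {0..<N}"
      by (rule coloured_copy_in_mono) (use sub in auto)
    then show ?thesis
      unfolding has_coloured_copy_iff_coloured_copy_in ..
  qed
qed

lemma blue_path_or_red_copy:
  assumes \<sigma>: "bij_betw \<sigma> {0..<a} {0..<a}" and "b \<le> 2 ^ j" and "(2 * a) ^ j \<le> N"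
  shows "has_coloured_copy a (path_edges a \<sigma>) col N \<or> has_coloured_copy b E (\<lambda>x y. \<not> col x y) N"
  using assms(2,3)
proof (induction j arbitrary: col N b E)
  case 0
  then show ?case
    using has_coloured_copy_le_one[of b N E] by simp
next
  case (Suc j)
  show ?case
  proof (cases "a = 0")
    case True
    then show ?thesis
      using has_coloured_copy_le_one[of a N] by simp
  next
    case False
    define s where "s = (2 * a) ^ j"
    have IH: "has_coloured_copy a (path_edges a \<sigma>) C s \<or>
        has_coloured_copy b' E' (\<lambda>x y. \<not> C x y) s" if "b' \<le> 2 ^ j" for C b' E'
      using Suc.IH[OF that] by (simp add: s_def)
    have "0 < s"
      using False by (simp add: s_def)
    moreover have "2 * s * a \<le> N"
      using Suc.prems(2) by (simp add: s_def ac_simps)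
    ultimately have "has_coloured_copy a (path_edges a \<sigma>) col N \<or>
      (\<exists>X Y. X \<subseteq> {0..<N} \<and> Y \<subseteq> {0..<N} \<and> card X = s \<and> card Y = s \<and>
         (\<forall>x\<in>X. \<forall>y\<in>Y. x < y \<and> \<not> col x y))"
      by (rule blue_path_or_red_pair[OF \<sigma>])
    moreover have "b \<le> 2 * 2 ^ j"
      using Suc.prems(1) by simp
    ultimately show ?thesis
      using blue_copy_or_red_copy_of_red_pair[OF IH] by blast
  qed
qed

theorem corollaryc:
  fixes n :: nat and \<sigma> :: "nat \<Rightarrow> nat"
  assumes "n \<ge> 1" and "bij_betw \<sigma> {0..<n} {0..<n}"
  shows "ordered_ramsey n (path_edges n \<sigma>) n (path_edges n \<sigma>)
           \<le> 2 ^ (nat \<lceil>log 2 (real n)\<rceil> * (nat \<lceil>log 2 (real n)\<rceil> + 1))"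
proof -
  define k where "k = nat \<lceil>log 2 (real n)\<rceil>"
  have "real n \<le> 2 ^ k"
    using power_of_nat_log_ge[of 2 "real n"] by (simp add: k_def)
  then have n: "n \<le> 2 ^ k"
    by (metis of_nat_le_iff of_nat_numeral of_nat_power)
  have "(2 * n) ^ k \<le> (2 * 2 ^ k) ^ k"
    using n by (intro power_mono) auto
  also have "\<dots> = 2 ^ (k * (k + 1))"
    by (simp add: power_mult[symmetric] power_add mult.commute)
  finally have "(2 * n) ^ k \<le> 2 ^ (k * (k + 1))" .
  then have "\<forall>col. has_coloured_copy n (path_edges n \<sigma>) col (2 ^ (k * (k + 1))) \<or>
      has_coloured_copy n (path_edges n \<sigma>) (\<lambda>x y. \<not> col x y) (2 ^ (k * (k + 1)))"
    using blue_path_or_red_copy[OF assms(2) n] by blast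
  then show ?thesis
    unfolding ordered_ramsey_def k_def[symmetric] by (rule Least_le)
qed

end
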